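(* Suppose the cost norm is $\|\cdot\|=\|\cdot\|_2$ and the Margin assumption holds. Let $\{y_t\}_{t\ge1}$ be generated by the gradient-based SMM algorithm with any positive stepsizes $\{\gamma_t\}$ (with the initialization terminating). Then $y_*^\top v(y_t)\ge0$ for all $t\ge1$ (equivalently $y_*^\top y_t\ge0$).
   Context: Setting: $\mathcal{A}\subseteq\mathbb{R}^d$, labels $\ell(A)\in\{\pm1\}$; $\operatorname{sign}(0)=+1$; cost constant $c>0$; norm $\|\cdot\|=\|\cdot\|_2$ (self-dual), $v(y)=y/\|y\|_2$ for $y\ne0$, $v(0)=0$. Predicted label $\hat\ell(x,y,b)=\operatorname{sign}(y^\top x+b-2\|y\|_2/c)$. Response: for $y\ne0$, $r(A,y,b)=A+(\tfrac2c-\tfrac{y^\top A+b}{\|y\|_2})v(y)$ if $0\le\tfrac{y^\top A+b}{\|y\|_2}<\tfrac2c$, else $A$. Proxy: for $y\ne0$, $s(A,y,b)=A-\tfrac{y^\top A+b}{\|y\|_2}v(y)$ if $0\le\tfrac{y^\top A+b}{\|y\|_2}<\tfrac2c$ and $\ell(A)=-1$; $=A+(\tfrac2c-\tfrac{y^\top A+b}{\|y\|_2})v(y)$ if the range condition holds and $\ell(A)=+1$; $=A$ otherwise; $r(A,0,b)=s(A,0,b)=A$. Margin function $h(y,b;\widetilde{\mathcal{A}}^+,\widetilde{\mathcal{A}}^-)=\min\{\min_{x\in\widetilde{\mathcal{A}}^+}(y^\top x+b),\min_{x\in\widetilde{\mathcal{A}}^-}(-y^\top x-b)\}$. Margin assumption: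 $d_*:=\max_{y\ne0,b}\min_{A\in\mathcal{A}}\ell(A)\frac{y^\top A+b}{\|y\|_2}$ attained at some $(y_*,b_* )$, $y_*\ne0$, $d_*>0$. Gradient-based SMM algorithm: initialization as follows: $\widetilde{\mathcal{A}}_0^\pm=\emptyset$, $(y,b)=(0,1)$; each arriving agent (responding with its true $A$) is added to $\widetilde{\mathcal{A}}_0^+$ or $\widetilde{\mathcal{A}}_0^-$ by label; then $b:=-1$ if $\widetilde{\mathcal{A}}_0^+=\emptyset$, else $b:=+1$ if $\widetilde{\mathcal{A}}_0^-=\emptyset$; stop when both nonempty; $(y_1,b_1)$ is an optimal solution of $\max\{h(y,b;\widetilde{\mathcal{A}}_0^+,\widetilde{\mathcal{A}}_0^-):\|y\|_2\le1,b\in\mathbb{R}\}$; set $z_1=y_1$. For $t\ge1$: agent $A_t\in\mathcal{A}$ is shown $(y_t,b_t)$, responds $r(A_t,y_t,b_t)$, is predicted $\hat\ell(r(A_t,y_t,b_t),y_t,b_t)$; $s(A_t,y_t,b_t)$ is appended to $\widetilde{\mathcal{A}}_{t-1}^+$ if $\ell(A_t)=+1$, else to $\widetilde{\mathcal{A}}_{t-1}^-$, giving $\widetilde{\mathcal{A}}_t^\pm$; choose $s_t^+\in\arg\min_{x\in\widetilde{\mathcal{A}}_t^+}z_t^\top x$, $s_t^-\in\arg\max_{x\in\widetilde{\mathcal{A}}_t^-}z_t^\top x$; set $z_{t+1}=\Pi_{B}(z_t+\gamma_t(s_t^+-s_t^-))$ where $\Pi_B$ is Euclidean projection onto the unit $\ell_2$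 ball; $y_{t+1}=\frac{\sum_{\tau=1}^{t+1}\gamma_\tau z_\tau}{\sum_{\tau=1}^{t+1}\gamma_\tau}$ and $b_{t+1}=-\tfrac12\big(\min_{x\in\widetilde{\mathcal{A}}_t^+}y_{t+1}^\top x+\max_{x\in\widetilde{\mathcal{A}}_t^-}y_{t+1}^\top x\big)$. *)

theory Defs
  imports "HOL-Analysis.Analysis"
begin

definition vdir :: "'a::euclidean_space \<Rightarrow> 'a" where
  "vdir y = (if y = 0 then 0 else (1 / norm y) *\<^sub>R y)"

definition resp :: "real \<Rightarrow> 'a::euclidean_space \<Rightarrow> 'a \<Rightarrow> real \<Rightarrow> 'a" where
  "resp c A y b =
     (if y = 0 then A
      else (let q = (y \<bullet> A + b) / norm y in
            if 0 \<le> q \<and> q < 2 / c then A + (2 / c - q) *\<^sub>R vdir y else A))"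

definition proxy :: "real \<Rightarrow> ('a \<Rightarrow> real) \<Rightarrow> 'a::euclidean_space \<Rightarrow> 'a \<Rightarrow> real \<Rightarrow> 'a" where
  "proxy c l A y b =
     (if y = 0 then A
      else (let q = (y \<bullet> A + b) / norm y in
            if 0 \<le> q \<and> q < 2 / c \<and> l A = -1 then A - q *\<^sub>R vdir y
            else if 0 \<le> q \<and> q < 2 / c \<and> l A = 1 then A + (2 / c - q) *\<^sub>R vdir y
            else A))"

definition hmarg :: "'a::euclidean_space \<Rightarrow> real \<Rightarrow> 'a set \<Rightarrow> 'a set \<Rightarrow> real" where
  "hmarg y b P N = min (Min ((\<lambda>x. y \<bullet> x + b) ` P)) (Min ((\<lambda>x. - (y \<bullet> x) - b) ` N))"

definition margin_lb :: "'a::euclidean_space set \<Rightarrow> ('a \<Rightarrow> real) \<Rightarrow> 'a \<Rightarrow> real \<Rightarrow> real \<Rightarrow> bool" where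
  "margin_lb AS l y b e \<longleftrightarrow> (\<forall>A\<in>AS. e \<le> l A * (y \<bullet> A + b) / norm y)"

text \<open>Margin assumption: d = max over (y \<noteq> 0, b) of inf over A of the signed distance,
  attained at (ys, bs), and d > 0.\<close>
definition margin_assumption :: "'a::euclidean_space set \<Rightarrow> ('a \<Rightarrow> real) \<Rightarrow> 'a \<Rightarrow> real \<Rightarrow> real \<Rightarrow> bool" where
  "margin_assumption AS l ys bs d \<longleftrightarrow>
     ys \<noteq> 0 \<and> d > 0 \<and> margin_lb AS l ys bs d \<and>
     (\<forall>y b e. y \<noteq> 0 \<longrightarrow> margin_lb AS l y b e \<longrightarrow> e \<le> d)"

end

theory Submission
  imports Defs
begin

text \<open>
  Let \<open>u = vdir ys\<close> and \<open>\<beta> = bs / norm ys\<close>. The optimal margin classifier \<open>y 1\<close> of the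
  initial sample satisfies \<open>u \<bullet> y 1 \<ge> 0\<close>: otherwise mixing it with \<open>u\<close>, weighted by the two
  margins, would have a strictly larger normalised margin. From then on everything stays in the
  half-space \<open>u \<bullet> x \<ge> 0\<close>: the averages \<open>y t\<close> of the \<open>z \<tau>\<close> do; hence every proxy moves its
  agent away from the hyperplane of \<open>(u, \<beta>)\<close> (positives along \<open>u\<close>, negatives against it),
  so \<open>P t\<close> and \<open>N t\<close> stay separated by \<open>(u, \<beta>)\<close>; hence \<open>sp t - sm t\<close> points into the
  half-space, and so does \<open>z (Suc t)\<close>, a positive multiple of \<open>z t + \<gamma> t *\<^sub>R (sp t - sm t)\<close>.
\<close>

lemma inner_vdir_nonneg_iff: "0 \<le> w \<bullet> vdir y \<longleftrightarrow> 0 \<le> w \<bullet> y"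
  by (simp add: vdir_def zero_le_divide_iff)

lemma norm_vdir: "y \<noteq> 0 \<Longrightarrow> norm (vdir y) = 1"
  by (simp add: vdir_def)

lemma margin_lb_iff_vdir:
  assumes "y \<noteq> 0"
  shows "margin_lb AS l y b e \<longleftrightarrow> (\<forall>A\<in>AS. e \<le> l A * (vdir y \<bullet> A + b / norm y))"
  using assms by (simp add: margin_lb_def vdir_def add_divide_distrib[symmetric])

lemma inner_proxy_ge_of_label_pos:
  assumes "l A = 1" "0 \<le> w \<bullet> y"
  shows "w \<bullet> A \<le> w \<bullet> proxy c l A y b"
  using assms inner_vdir_nonneg_iff[of w y]
  by (auto simp: proxy_def Let_def inner_add_right)

lemma inner_proxy_le_of_label_not_pos:
  assumes "l A \<noteq> 1" "0 \<le> w \<bullet> y"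
  shows "w \<bullet> proxy c l A y b \<le> w \<bullet> A"
  using assms inner_vdir_nonneg_iff[of w y] mult_nonneg_nonneg[of "(y \<bullet> A + b) / norm y" "w \<bullet> vdir y"]
  by (auto simp: proxy_def Let_def inner_diff_right)

lemma closest_point_unit_cball:
  fixes w :: "'a::euclidean_space"
  shows "closest_point (cball 0 1) w = (if norm w \<le> 1 then w else (1 / norm w) *\<^sub>R w)"
proof (cases "norm w \<le> 1")
  case True
  then show ?thesis by (simp add: closest_point_self)
next
  case False
  have "closest_point (cball 0 1) w = (1 / norm w) *\<^sub>R w"
  proof (rule closest_point_unique[symmetric])
    show "(1 / norm w) *\<^sub>R w \<in> cball 0 1" using False by simp
    have "dist w ((1 / norm w) *\<^sub>R w) = norm w - 1"
    proof -
      have "w - (1 / norm w) *\<^sub>R w = (1 - 1 / norm w) *\<^sub>R w" by (simp add: algebra_simps)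
      moreover have "0 \<le> 1 - 1 / norm w" using False by (simp add: divide_le_eq_1)
      ultimately show ?thesis using False by (auto simp: dist_norm left_diff_distrib)
    qed
    then show "\<forall>x\<in>cball 0 1. dist w ((1 / norm w) *\<^sub>R w) \<le> dist w x"
      using norm_triangle_ineq2[of w] by (smt (verit) dist_norm mem_cball_0)
  qed auto
  with False show ?thesis by simp
qed

lemma inner_closest_point_unit_cball_nonneg:
  fixes v w :: "'a::euclidean_space"
  shows "0 \<le> v \<bullet> w \<Longrightarrow> 0 \<le> v \<bullet> closest_point (cball 0 1) w"
  by (simp add: closest_point_unit_cball)

lemma hmarg_greatest:
  assumes "finite P" "P \<noteq> {}" "finite N" "N \<noteq> {}"
    and "\<And>x. x \<in> P \<Longrightarrow> e \<le> y \<bullet> x + b" "\<And>x. x \<in> N \<Longrightarrow> e \<le> - (y \<bullet> x) - b"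
  shows "e \<le> hmarg y b P N"
  using assms by (simp add: hmarg_def)

lemma hmarg_le_pos: "finite P \<Longrightarrow> finite N \<Longrightarrow> x \<in> P \<Longrightarrow> hmarg y b P N \<le> y \<bullet> x + b"
  by (simp add: hmarg_def min.coboundedI1)

lemma hmarg_le_neg: "finite P \<Longrightarrow> finite N \<Longrightarrow> x \<in> N \<Longrightarrow> hmarg y b P N \<le> - (y \<bullet> x) - b"
  by (simp add: hmarg_def min.coboundedI2)

lemma hmarg_superadditive:
  assumes fin: "finite P" "P \<noteq> {}" "finite N" "N \<noteq> {}" and p: "0 \<le> p" and q: "0 \<le> q"
  shows "p * hmarg y b P N + q * hmarg y' b' P N \<le> hmarg (p *\<^sub>R y + q *\<^sub>R y') (p * b + q * b') P N"
proof (rule hmarg_greatest[OF fin])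
  fix x assume "x \<in> P"
  then have "p * hmarg y b P N + q * hmarg y' b' P N \<le> p * (y \<bullet> x + b) + q * (y' \<bullet> x + b')"
    using fin p q by (intro add_mono mult_left_mono hmarg_le_pos) auto
  then show "p * hmarg y b P N + q * hmarg y' b' P N \<le> (p *\<^sub>R y + q *\<^sub>R y') \<bullet> x + (p * b + q * b')"
    by (simp add: inner_add_left algebra_simps)
next
  fix x assume "x \<in> N"
  then have "p * hmarg y b P N + q * hmarg y' b' P N \<le> p * (- (y \<bullet> x) - b) + q * (- (y' \<bullet> x) - b')"
    using fin p q by (intro add_mono mult_left_mono hmarg_le_neg) auto
  then show "p * hmarg y b P N + q * hmarg y' b' P N \<le> - ((p *\<^sub>R y + q *\<^sub>R y') \<bullet> x) - (p * b + q * b')"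
    by (simp add: inner_add_left algebra_simps)
qed

lemma hmarg_le_norm_mult:
  assumes fin: "finite P" "P \<noteq> {}" "finite N" "N \<noteq> {}"
    and bound: "\<And>y' b'. norm y' \<le> 1 \<Longrightarrow> hmarg y' b' P N \<le> m"
  shows "hmarg y b P N \<le> norm y * m"
proof (cases "y = 0")
  case True
  obtain p n where "p \<in> P" "n \<in> N" using fin by blast
  then have "hmarg y b P N \<le> b" "hmarg y b P N \<le> - b"
    using True hmarg_le_pos[OF fin(1,3), of p y b] hmarg_le_neg[OF fin(1,3), of n y b] by simp_all
  with True show ?thesis by simp
next
  case False
  let ?k = "1 / norm y"
  have "?k * hmarg y b P N \<le> hmarg (?k *\<^sub>R y) (?k * b) P N"
    using hmarg_superadditive[OF fin, of ?k 0 y b 0 0] by simp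
  also have "\<dots> \<le> m" using False by (intro bound) simp
  finally show ?thesis using False by (simp add: field_simps)
qed

lemma norm_add_square_le_of_inner_nonpos:
  "x \<bullet> y \<le> 0 \<Longrightarrow> (norm (x + y))\<^sup>2 \<le> (norm x)\<^sup>2 + (norm y)\<^sup>2"
  using dot_norm[of x y] by simp

lemma max_margin_inner_nonneg:
  assumes fin: "finite P" "P \<noteq> {}" "finite N" "N \<noteq> {}"
    and y_norm: "norm y \<le> 1"
    and y_opt: "\<And>y' b'. norm y' \<le> 1 \<Longrightarrow> hmarg y' b' P N \<le> hmarg y b P N"
    and u_norm: "norm u \<le> 1" and "0 < d" and u_margin: "d \<le> hmarg u \<beta> P N"
  shows "0 \<le> u \<bullet> y"
proof (rule ccontr)
  assume obtuse: "\<not> 0 \<le> u \<bullet> y"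
  define m where "m = hmarg y b P N"
  have "d \<le> m" using u_margin y_opt[OF u_norm, of \<beta>] by (simp add: m_def)
  \<comment> \<open>its margin is at least \<open>m\<^sup>2 + d\<^sup>2\<close> while its squared norm is at most \<open>m\<^sup>2 + d\<^sup>2\<close>\<close>
  define y' where "y' = m *\<^sub>R y + d *\<^sub>R u"
  have "m * m + d * d \<le> m * m + d * hmarg u \<beta> P N"
    using u_margin \<open>0 < d\<close> by simp
  also have "\<dots> \<le> hmarg y' (m * b + d * \<beta>) P N"
    using hmarg_superadditive[OF fin, of m d y b u \<beta>] \<open>0 < d\<close> \<open>d \<le> m\<close>
    by (simp add: m_def y'_def)
  also have "\<dots> \<le> norm y' * m"
    using hmarg_le_norm_mult[OF fin] y_opt by (simp add: m_def)
  finally have lower: "m\<^sup>2 + d\<^sup>2 \<le> norm y' * m" by (simp add: power2_eq_square)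
  have "(norm y')\<^sup>2 \<le> (norm (m *\<^sub>R y))\<^sup>2 + (norm (d *\<^sub>R u))\<^sup>2"
    unfolding y'_def using obtuse \<open>0 < d\<close> \<open>d \<le> m\<close>
    by (intro norm_add_square_le_of_inner_nonpos) (simp add: inner_commute mult_nonneg_nonpos)
  also have "\<dots> \<le> m\<^sup>2 + d\<^sup>2"
    using y_norm u_norm \<open>0 < d\<close> \<open>d \<le> m\<close>
    by (intro add_mono) (simp_all add: power_mult_distrib power_le_one mult_left_le)
  finally have upper: "(norm y')\<^sup>2 \<le> m\<^sup>2 + d\<^sup>2" .
  have "(m\<^sup>2 + d\<^sup>2)\<^sup>2 \<le> (norm y')\<^sup>2 * m\<^sup>2"
    using power_mono[OF lower, of 2] \<open>0 < d\<close> by (simp add: power_mult_distrib)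
  also have "\<dots> \<le> (m\<^sup>2 + d\<^sup>2) * m\<^sup>2" using upper by (simp add: mult_right_mono)
  finally have "(m\<^sup>2 + d\<^sup>2) * (m\<^sup>2 + d\<^sup>2) \<le> (m\<^sup>2 + d\<^sup>2) * m\<^sup>2"
    by (simp only: power2_eq_square[of "m\<^sup>2 + d\<^sup>2"])
  moreover have "0 < m\<^sup>2 + d\<^sup>2" using \<open>0 < d\<close> by (simp add: add_nonneg_pos)
  ultimately have "m\<^sup>2 + d\<^sup>2 \<le> m\<^sup>2" by simp
  with \<open>0 < d\<close> show False by simp
qed

definition separates :: "'a::real_inner \<Rightarrow> real \<Rightarrow> 'a set \<Rightarrow> 'a set \<Rightarrow> bool" where
  "separates w \<beta> P N \<longleftrightarrow> (\<forall>x\<in>P. 0 \<le> w \<bullet> x + \<beta>) \<and> (\<forall>x\<in>N. w \<bullet> x + \<beta> \<le> 0)"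

lemma separates_mono: "separates w \<beta> P N \<Longrightarrow> P' \<subseteq> P \<Longrightarrow> N' \<subseteq> N \<Longrightarrow> separates w \<beta> P' N'"
  by (auto simp: separates_def)

lemma labelled_margin_pos:
  "\<forall>A\<in>AS. e \<le> l A * (w \<bullet> A + \<beta>) \<Longrightarrow> A \<in> AS \<Longrightarrow> l A = 1 \<Longrightarrow> e \<le> w \<bullet> A + \<beta>"
  by force

lemma labelled_margin_neg:
  assumes "\<forall>A\<in>AS. l A = 1 \<or> l A = -1" "\<forall>A\<in>AS. e \<le> l A * (w \<bullet> A + \<beta>)" "A \<in> AS" "l A \<noteq> 1"
  shows "e \<le> - (w \<bullet> A) - \<beta>"
  using assms by force

lemma separates_of_labelled_margin:
  assumes "\<forall>A\<in>AS. l A = 1 \<or> l A = -1" "\<forall>A\<in>AS. e \<le> l A * (w \<bullet> A + \<beta>)" "0 \<le> e"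
  shows "separates w \<beta> {A\<in>AS. l A = 1} {A\<in>AS. l A \<noteq> 1}"
  using assms labelled_margin_pos[OF assms(2)] labelled_margin_neg[OF assms(1,2)]
  by (force simp: separates_def)

lemma hmarg_ge_of_labelled_margin:
  assumes "\<forall>A\<in>AS. l A = 1 \<or> l A = -1" "\<forall>A\<in>AS. e \<le> l A * (w \<bullet> A + \<beta>)"
    and fin: "finite P" "P \<noteq> {}" "finite N" "N \<noteq> {}"
    and "P \<subseteq> {A\<in>AS. l A = 1}" "N \<subseteq> {A\<in>AS. l A \<noteq> 1}"
  shows "e \<le> hmarg w \<beta> P N"
  using assms labelled_margin_pos[OF assms(2)] labelled_margin_neg[OF assms(1,2)]
  by (intro hmarg_greatest[OF fin]) auto

text \<open>Only the membership of \<open>sp t\<close> and \<open>sm t\<close> in \<open>P t\<close> and \<open>N t\<close> matters, not their extremality.\<close>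

locale smm_iteration =
  fixes c :: real and l :: "'a::euclidean_space \<Rightarrow> real" and AS :: "'a set"
    and Ag :: "nat \<Rightarrow> 'a" and \<gamma> :: "nat \<Rightarrow> real"
    and y z sp sm :: "nat \<Rightarrow> 'a" and b :: "nat \<Rightarrow> real" and P N :: "nat \<Rightarrow> 'a set"
  assumes z1: "z 1 = y 1"
    and gamma_pos: "\<forall>t\<ge>1. \<gamma> t > 0"
    and agents: "\<forall>t\<ge>1. Ag t \<in> AS"
    and Pstep: "\<forall>t\<ge>1. P t = (if l (Ag t) = 1 then insert (proxy c l (Ag t) (y t) (b t)) (P (t - 1)) else P (t - 1))"
    and Nstep: "\<forall>t\<ge>1. N t = (if l (Ag t) = 1 then N (t - 1) else insert (proxy c l (Ag t) (y t) (b t)) (N (t - 1)))"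
    and sp_in: "\<forall>t\<ge>1. sp t \<in> P t"
    and sm_in: "\<forall>t\<ge>1. sm t \<in> N t"
    and zstep: "\<forall>t\<ge>1. z (Suc t) = closest_point (cball 0 1) (z t + \<gamma> t *\<^sub>R (sp t - sm t))"
    and ystep: "\<forall>t\<ge>1. y (Suc t) = (1 / (\<Sum>\<tau>=1..Suc t. \<gamma> \<tau>)) *\<^sub>R (\<Sum>\<tau>=1..Suc t. \<gamma> \<tau> *\<^sub>R z \<tau>)"
begin

lemma inner_y_nonneg:
  assumes "1 \<le> t" and z_nonneg: "\<forall>\<tau>\<in>{1..t}. 0 \<le> w \<bullet> z \<tau>"
  shows "0 \<le> w \<bullet> y t"
proof (cases "t = 1")
  case True
  with z_nonneg z1 show ?thesis by simp
next
  case False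
  then obtain s where t: "t = Suc s" "1 \<le> s" using \<open>1 \<le> t\<close> by (cases t) auto
  have "0 \<le> w \<bullet> (\<Sum>\<tau>=1..t. \<gamma> \<tau> *\<^sub>R z \<tau>)"
    using gamma_pos z_nonneg by (auto simp: inner_sum_right intro!: sum_nonneg)
  moreover have "0 < (\<Sum>\<tau>=1..t. \<gamma> \<tau>)"
    using gamma_pos \<open>1 \<le> t\<close> by (intro sum_pos) auto
  ultimately show ?thesis using ystep t by simp
qed

lemma separates_step:
  assumes "1 \<le> t" and sep_AS: "separates w \<beta> {A\<in>AS. l A = 1} {A\<in>AS. l A \<noteq> 1}"
    and sep: "separates w \<beta> (P (t - 1)) (N (t - 1))" and y_nonneg: "0 \<le> w \<bullet> y t"
  shows "separates w \<beta> (P t) (N t)"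
proof (cases "l (Ag t) = 1")
  case True
  have "0 \<le> w \<bullet> Ag t + \<beta>" using sep_AS agents True \<open>1 \<le> t\<close> by (auto simp: separates_def)
  moreover have "w \<bullet> Ag t \<le> w \<bullet> proxy c l (Ag t) (y t) (b t)"
    using True y_nonneg by (rule inner_proxy_ge_of_label_pos)
  ultimately show ?thesis using sep True Pstep Nstep \<open>1 \<le> t\<close> by (auto simp: separates_def)
next
  case False
  have "w \<bullet> Ag t + \<beta> \<le> 0" using sep_AS agents False \<open>1 \<le> t\<close> by (auto simp: separates_def)
  moreover have "w \<bullet> proxy c l (Ag t) (y t) (b t) \<le> w \<bullet> Ag t"
    using False y_nonneg by (rule inner_proxy_le_of_label_not_pos)
  ultimately show ?thesis using sep False Pstep Nstep \<open>1 \<le> t\<close> by (auto simp: separates_def)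
qed

lemma inner_z_Suc_nonneg:
  assumes "1 \<le> t" "0 \<le> w \<bullet> z t" "separates w \<beta> (P t) (N t)"
  shows "0 \<le> w \<bullet> z (Suc t)"
proof -
  have "0 \<le> w \<bullet> (sp t - sm t)"
    using assms sp_in sm_in by (force simp: separates_def inner_diff_right)
  then have "0 \<le> w \<bullet> (z t + \<gamma> t *\<^sub>R (sp t - sm t))"
    using assms gamma_pos by (simp add: inner_add_right less_imp_le)
  then show ?thesis using zstep \<open>1 \<le> t\<close> inner_closest_point_unit_cball_nonneg by simp
qed

lemma halfspace_invariant:
  assumes sep_AS: "separates w \<beta> {A\<in>AS. l A = 1} {A\<in>AS. l A \<noteq> 1}"
    and sep0: "separates w \<beta> (P 0) (N 0)" and z1_nonneg: "0 \<le> w \<bullet> z 1"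
  shows "(\<forall>\<tau>\<in>{1..Suc n}. 0 \<le> w \<bullet> z \<tau>) \<and> separates w \<beta> (P n) (N n)"
proof (induction n)
  case 0
  with sep0 z1_nonneg show ?case by simp
next
  case (Suc n)
  then have y_nonneg: "0 \<le> w \<bullet> y (Suc n)" by (intro inner_y_nonneg) auto
  have sep: "separates w \<beta> (P (Suc n)) (N (Suc n))"
    using separates_step[OF _ sep_AS _ y_nonneg] Suc by simp
  have "0 \<le> w \<bullet> z (Suc (Suc n))"
    using inner_z_Suc_nonneg[OF _ _ sep] Suc by simp
  with Suc sep show ?case by (auto simp: le_Suc_eq)
qed

lemma inner_y_nonneg_all:
  assumes "separates w \<beta> {A\<in>AS. l A = 1} {A\<in>AS. l A \<noteq> 1}"
    and "separates w \<beta> (P 0) (N 0)" and "0 \<le> w \<bullet> z 1" and "1 \<le> t"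
  shows "0 \<le> w \<bullet> y t"
  using halfspace_invariant[OF assms(1-3), of "t - 1"] \<open>1 \<le> t\<close> by (intro inner_y_nonneg) auto

end

theorem mainTheorem12:
  fixes AS :: "'a::euclidean_space set" and l :: "'a \<Rightarrow> real" and c :: real
    and ys :: 'a and bs :: real and d :: real
    and init :: "'a list"
    and Ag :: "nat \<Rightarrow> 'a" and \<gamma> :: "nat \<Rightarrow> real"
    and y z sp sm :: "nat \<Rightarrow> 'a" and b :: "nat \<Rightarrow> real"
    and P N :: "nat \<Rightarrow> 'a set"
  assumes labels: "\<forall>A\<in>AS. l A = 1 \<or> l A = -1"
    and cpos: "c > 0"
    and margin: "margin_assumption AS l ys bs d"
    \<comment> \<open>initialization: agents arrive until both labels have been seen\<close>
    and init_in: "set init \<subseteq> AS"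
    and init_pos: "\<exists>A\<in>set init. l A = 1"
    and init_neg: "\<exists>A\<in>set init. l A = -1"
    and init_stop: "\<not> ((\<exists>A\<in>set (butlast init). l A = 1) \<and> (\<exists>A\<in>set (butlast init). l A = -1))"
    and P0: "P 0 = {A \<in> set init. l A = 1}"
    and N0: "N 0 = {A \<in> set init. l A = -1}"
    and y1_norm: "norm (y 1) \<le> 1"
    and y1_opt: "\<forall>y' b'. norm y' \<le> 1 \<longrightarrow> hmarg y' b' (P 0) (N 0) \<le> hmarg (y 1) (b 1) (P 0) (N 0)"
    and z1: "z 1 = y 1"
    \<comment> \<open>iterations t \<ge> 1\<close>
    and gamma_pos: "\<forall>t\<ge>1. \<gamma> t > 0"
    and agents: "\<forall>t\<ge>1. Ag t \<in> AS"
    and Pstep: "\<forall>t\<ge>1. P t = (if l (Ag t) = 1 then insert (proxy c l (Ag t) (y t) (b t)) (P (t - 1)) else P (t - 1))"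
    and Nstep: "\<forall>t\<ge>1. N t = (if l (Ag t) = 1 then N (t - 1) else insert (proxy c l (Ag t) (y t) (b t)) (N (t - 1)))"
    and sp_def: "\<forall>t\<ge>1. sp t \<in> P t \<and> (\<forall>x\<in>P t. z t \<bullet> sp t \<le> z t \<bullet> x)"
    and sm_def: "\<forall>t\<ge>1. sm t \<in> N t \<and> (\<forall>x\<in>N t. z t \<bullet> x \<le> z t \<bullet> sm t)"
    and zstep: "\<forall>t\<ge>1. z (Suc t) = closest_point (cball 0 1) (z t + \<gamma> t *\<^sub>R (sp t - sm t))"
    and ystep: "\<forall>t\<ge>1. y (Suc t) = (1 / (\<Sum>\<tau>=1..Suc t. \<gamma> \<tau>)) *\<^sub>R (\<Sum>\<tau>=1..Suc t. \<gamma> \<tau> *\<^sub>R z \<tau>)"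
    and bstep: "\<forall>t\<ge>1. b (Suc t) = - (Min ((\<lambda>x. y (Suc t) \<bullet> x) ` P t) + Max ((\<lambda>x. y (Suc t) \<bullet> x) ` N t)) / 2"
  shows "\<forall>t\<ge>1. ys \<bullet> vdir (y t) \<ge> 0"
proof -
  from margin have "ys \<noteq> 0" "0 < d" and lb: "margin_lb AS l ys bs d"
    by (simp_all add: margin_assumption_def)
  define u where "u = vdir ys"
  define \<beta> where "\<beta> = bs / norm ys"
  have u_margin: "\<forall>A\<in>AS. d \<le> l A * (u \<bullet> A + \<beta>)"
    using lb margin_lb_iff_vdir[OF \<open>ys \<noteq> 0\<close>] by (simp add: u_def \<beta>_def)
  interpret smm_iteration c l AS Ag \<gamma> y z sp sm b P N
    using z1 gamma_pos agents Pstep Nstep sp_def sm_def zstep ystep by unfold_locales auto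
  have fin0: "finite (P 0)" "P 0 \<noteq> {}" "finite (N 0)" "N 0 \<noteq> {}"
    using P0 N0 init_pos init_neg by auto
  have init_labelled: "P 0 \<subseteq> {A\<in>AS. l A = 1}" "N 0 \<subseteq> {A\<in>AS. l A \<noteq> 1}"
    using P0 N0 init_in by auto
  have "0 \<le> u \<bullet> y 1"
  proof (rule max_margin_inner_nonneg[OF fin0 y1_norm _ _ \<open>0 < d\<close>])
    show "\<And>y' b'. norm y' \<le> 1 \<Longrightarrow> hmarg y' b' (P 0) (N 0) \<le> hmarg (y 1) (b 1) (P 0) (N 0)"
      using y1_opt by blast
    show "norm u \<le> 1" by (simp add: u_def \<open>ys \<noteq> 0\<close> norm_vdir)
    show "d \<le> hmarg u \<beta> (P 0) (N 0)"
      by (rule hmarg_ge_of_labelled_margin[OF labels u_margin fin0 init_labelled])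
  qed
  moreover have sep_AS: "separates u \<beta> {A\<in>AS. l A = 1} {A\<in>AS. l A \<noteq> 1}"
    using separates_of_labelled_margin[OF labels u_margin] \<open>0 < d\<close> by simp
  ultimately have "0 \<le> u \<bullet> y t" if "1 \<le> t" for t
    using inner_y_nonneg_all[OF sep_AS separates_mono[OF sep_AS init_labelled]] that z1 by simp
  then show ?thesis
    by (simp add: u_def inner_commute[of _ ys] inner_commute[of "vdir ys"] inner_vdir_nonneg_iff)
qed

end
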